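(* Let $(N,M,G,\rhd)$ be a lexicographic mixed instance, let $H\subseteq \bar C$ be a set of common chores, and let $B$ be a partial allocation of items of $M\setminus H$ that is Pareto optimal. Suppose that for every agent $i\in N$, every item of $H$ is $\rhd_i$-more important than every item of $G_i\cup B_i$. Then every (possibly partial) allocation $A$ obtained by extending $B$ by a serial dictatorship on the items of $H$, with an arbitrary ordering of agents and arbitrary quotas, is Pareto optimal.
   Context: A lexicographic mixed instance $(N,M,G,\rhd)$ consists of a set $N=[n]$ of agents, a finite set $M$ of items, for each agent $i$ a set $G_i\subseteq M$ of goods for $i$ (chores for $i$: $C_i=M\setminus G_i$), and for each $i$ a strict linear order $\rhd_i$ on $M$. Common chores: $\bar C=\bigcap_{i\in N}C_i$. For distinct $X,Y\subseteq M$, $X\succ_i Y$ iff the $\rhd_i$-most important item of $X\triangle Y$ lies in $(X\cap G_i)\cup(Y\cap C_i)$; $X\succeq_i Y$ means $X\succ_i Y$ or $X=Y$. A (partial) allocation is a tuple $(A_i)_{i\in N}$ of pairwise disjoint subsets of $M$. A partial allocation $A'$ Pareto dominates $A$ if $\bigcup_i A'_i=\bigcup_i A_i$, $A'_i\succeq_i A_i$ for all $i$, and $A'_i\succ_i A_i$ for some $i$; $A$ is Pareto optimal if no partial allocation Pareto dominates it. A serial dictatorship with ordering $\sigma=(\sigma_1,\dots,\sigma_n)$ of the agents and integer quotas $q=(q_1,\dots,q_n)$, started from a partial allocation, processes $\sigma_1,\sigma_2,\dots$ in turn; at agent $\sigma_t$'s step, if unallocated items (here: items of $H$) remain, $\sigma_t$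 adds to its bundle its $q_{\sigma_t}$ most preferred remaining items (the most important remaining goods for it, and then, if there are not enough goods, the least important remaining chores for it), or all remaining ones if fewer remain. *)

theory Defs
  imports Main
begin

text \<open>Agents are natural numbers; N = {..<n}. Items have type 'b.
  G i : goods of agent i; R i : strict importance order of agent i,
  (x,y) \<in> R i meaning x is more important than y for agent i.\<close>

definition lex_instance :: "nat \<Rightarrow> 'b set \<Rightarrow> (nat \<Rightarrow> 'b set) \<Rightarrow> (nat \<Rightarrow> 'b rel) \<Rightarrow> bool" where
  "lex_instance n M G R \<longleftrightarrow> finite M \<and>
     (\<forall>i<n. G i \<subseteq> M \<and> R i \<subseteq> M \<times> M \<and> strict_linear_order_on M (R i))"

definition common_chores :: "nat \<Rightarrow> 'b set \<Rightarrow> (nat \<Rightarrow> 'b set) \<Rightarrow> 'b set" where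
  "common_chores n M G = {x \<in> M. \<forall>i<n. x \<notin> G i}"

definition strict_pref :: "'b set \<Rightarrow> (nat \<Rightarrow> 'b set) \<Rightarrow> (nat \<Rightarrow> 'b rel) \<Rightarrow> nat \<Rightarrow> 'b set \<Rightarrow> 'b set \<Rightarrow> bool" where
  "strict_pref M G R i X Y \<longleftrightarrow> X \<noteq> Y \<and>
     (\<exists>z \<in> (X - Y) \<union> (Y - X).
        (\<forall>w \<in> (X - Y) \<union> (Y - X). w \<noteq> z \<longrightarrow> (z, w) \<in> R i) \<and>
        (z \<in> X \<inter> G i \<or> z \<in> Y \<inter> (M - G i)))"

definition weak_pref :: "'b set \<Rightarrow> (nat \<Rightarrow> 'b set) \<Rightarrow> (nat \<Rightarrow> 'b rel) \<Rightarrow> nat \<Rightarrow> 'b set \<Rightarrow> 'b set \<Rightarrow> bool" where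
  "weak_pref M G R i X Y \<longleftrightarrow> strict_pref M G R i X Y \<or> X = Y"

definition partial_alloc :: "nat \<Rightarrow> 'b set \<Rightarrow> (nat \<Rightarrow> 'b set) \<Rightarrow> bool" where
  "partial_alloc n M A \<longleftrightarrow> (\<forall>i<n. A i \<subseteq> M) \<and> (\<forall>i<n. \<forall>j<n. i \<noteq> j \<longrightarrow> A i \<inter> A j = {})"

definition pareto_dominates :: "nat \<Rightarrow> 'b set \<Rightarrow> (nat \<Rightarrow> 'b set) \<Rightarrow> (nat \<Rightarrow> 'b rel) \<Rightarrow> (nat \<Rightarrow> 'b set) \<Rightarrow> (nat \<Rightarrow> 'b set) \<Rightarrow> bool" where
  "pareto_dominates n M G R A' A \<longleftrightarrow>
     (\<Union>i<n. A' i) = (\<Union>i<n. A i) \<and>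
     (\<forall>i<n. weak_pref M G R i (A' i) (A i)) \<and>
     (\<exists>i<n. strict_pref M G R i (A' i) (A i))"

definition pareto_optimal :: "nat \<Rightarrow> 'b set \<Rightarrow> (nat \<Rightarrow> 'b set) \<Rightarrow> (nat \<Rightarrow> 'b rel) \<Rightarrow> (nat \<Rightarrow> 'b set) \<Rightarrow> bool" where
  "pareto_optimal n M G R A \<longleftrightarrow>
     (\<nexists>A'. partial_alloc n M A' \<and> pareto_dominates n M G R A' A)"

definition item_better :: "(nat \<Rightarrow> 'b set) \<Rightarrow> (nat \<Rightarrow> 'b rel) \<Rightarrow> nat \<Rightarrow> 'b \<Rightarrow> 'b \<Rightarrow> bool" where
  "item_better G R i x y \<longleftrightarrow>
     (x \<in> G i \<and> y \<notin> G i) \<or>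
     (x \<in> G i \<and> y \<in> G i \<and> (x, y) \<in> R i) \<or>
     (x \<notin> G i \<and> y \<notin> G i \<and> (y, x) \<in> R i)"

definition sd_pick :: "(nat \<Rightarrow> 'b set) \<Rightarrow> (nat \<Rightarrow> 'b rel) \<Rightarrow> nat \<Rightarrow> nat \<Rightarrow> 'b set \<Rightarrow> 'b set \<Rightarrow> bool" where
  "sd_pick G R i k Rem P \<longleftrightarrow> P \<subseteq> Rem \<and> card P = min k (card Rem) \<and>
     (\<forall>x\<in>P. \<forall>y\<in>Rem - P. item_better G R i x y)"

text \<open>sd_run G R q \<sigma> A Rem A': running the serial dictatorship with
  ordering \<sigma> and quotas q from partial allocation A with unallocated items
  Rem yields allocation A'.\<close>
fun sd_run :: "(nat \<Rightarrow> 'b set) \<Rightarrow> (nat \<Rightarrow> 'b rel) \<Rightarrow> (nat \<Rightarrow> nat) \<Rightarrow> nat list \<Rightarrow>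
    (nat \<Rightarrow> 'b set) \<Rightarrow> 'b set \<Rightarrow> (nat \<Rightarrow> 'b set) \<Rightarrow> bool" where
  "sd_run G R q [] A Rem A' \<longleftrightarrow> A' = A"
| "sd_run G R q (i # \<sigma>) A Rem A' \<longleftrightarrow>
     (\<exists>P. sd_pick G R i (q i) Rem P \<and> sd_run G R q \<sigma> (A(i := A i \<union> P)) (Rem - P) A')"

end

theory Submission
  imports Defs
begin

(* Suppose A' Pareto dominates A. For every agent the items of H outrank its goods and its
   bundle in B, so whenever the H-parts of A' i and A i differ, the decisive item of their
   symmetric difference lies in H: each agent weakly prefers its H-part under A' to the chores
   it picked in the serial dictatorship. All of H consists of chores, so each dictator took its
   least important remaining ones, and induction along the picking order shows that the
   H-parts coincide. Deleting H from A' then yields an allocation dominating B. *)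

lemma sd_run_extends:
  "sd_run G R q \<sigma> C Rem A \<Longrightarrow> C j \<subseteq> A j \<and> A j \<subseteq> C j \<union> Rem"
proof (induction \<sigma> arbitrary: C Rem)
  case Nil
  then show ?case by simp
next
  case (Cons t \<sigma>)
  then obtain P where "P \<subseteq> Rem" "sd_run G R q \<sigma> (C(t := C t \<union> P)) (Rem - P) A"
    by (auto simp: sd_pick_def)
  with Cons.IH show ?case by (fastforce split: if_splits)
qed

lemma sd_run_inactive:
  "sd_run G R q \<sigma> C Rem A \<Longrightarrow> j \<notin> set \<sigma> \<Longrightarrow> A j = C j"
  by (induction \<sigma> arbitrary: C Rem) auto

lemma item_better_chores_iff:
  "x \<notin> G i \<Longrightarrow> y \<notin> G i \<Longrightarrow> item_better G R i x y \<longleftrightarrow> (y, x) \<in> R i"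
  by (auto simp: item_better_def)

lemma weak_pref_chores_outweighed:
  assumes pref: "weak_pref M G R i X Y" and chores: "X \<inter> G i = {}" and y: "y \<in> X - Y"
  shows "\<exists>p \<in> Y - X. (p, y) \<in> R i"
proof -
  from pref y have "strict_pref M G R i X Y" by (auto simp: weak_pref_def)
  then obtain z where most: "\<forall>w \<in> sym_diff X Y. w \<noteq> z \<longrightarrow> (z, w) \<in> R i"
    and z: "z \<in> sym_diff X Y" "z \<in> X \<inter> G i \<or> z \<in> Y \<inter> (M - G i)"
    unfolding strict_pref_def by blast
  from z chores have "z \<in> Y - X" by blast
  moreover from this y most have "(z, y) \<in> R i" by auto
  ultimately show ?thesis by blast
qed

lemma weak_pref_chores_superset_eq:
  assumes "weak_pref M G R i X Y" "X \<inter> G i = {}" "Y \<subseteq> X"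
  shows "X = Y"
  using weak_pref_chores_outweighed[OF assms(1,2)] assms(3) by blast

lemma sd_pick_chores_no_extra:
  assumes pick: "sd_pick G R i k Rem P" and asym: "asym (R i)"
    and chores: "Rem \<inter> G i = {}" "X \<inter> G i = {}"
    and pref: "weak_pref M G R i X P"
  shows "X \<inter> (Rem - P) = {}"
proof (rule ccontr)
  assume "X \<inter> (Rem - P) \<noteq> {}"
  then obtain y where y: "y \<in> X" "y \<in> Rem" "y \<notin> P" by blast
  then obtain p where p: "p \<in> P" "(p, y) \<in> R i"
    using weak_pref_chores_outweighed[OF pref chores(2)] by blast
  from pick p y have "item_better G R i p y" by (auto simp: sd_pick_def)
  moreover have "p \<notin> G i" "y \<notin> G i" using pick p y chores(1) by (auto simp: sd_pick_def)
  ultimately have "(y, p) \<in> R i" by (simp add: item_better_chores_iff)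
  with p asym show False by (blast dest: asymD)
qed

lemma weak_pref_restrict_important:
  assumes asym: "asym (R i)"
    and disj: "H \<inter> G i = {}" "K \<inter> H = {}"
    and bounds: "K \<subseteq> Y" "Y \<subseteq> K \<union> H"
    and important: "\<forall>h\<in>H. \<forall>x \<in> G i \<union> K. (h, x) \<in> R i"
    and pref: "weak_pref M G R i X Y"
  shows "weak_pref M G R i (X \<inter> H) (Y - K)"
proof (cases "X \<inter> H = Y - K")
  case True
  then show ?thesis by (simp add: weak_pref_def)
next
  case False
  have sub: "sym_diff (X \<inter> H) (Y - K) \<subseteq> sym_diff X Y"
    using disj bounds by blast
  from False obtain y where y: "y \<in> sym_diff (X \<inter> H) (Y - K)" by blast
  with sub bounds have yH: "y \<in> H" "y \<in> sym_diff X Y" by blast+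
  from False disj bounds have "X \<noteq> Y" by blast
  with pref have "strict_pref M G R i X Y" by (simp add: weak_pref_def)
  then obtain z where z: "z \<in> sym_diff X Y"
    and most: "\<forall>w \<in> sym_diff X Y. w \<noteq> z \<longrightarrow> (z, w) \<in> R i"
    and side: "z \<in> X \<inter> G i \<or> z \<in> Y \<inter> (M - G i)"
    unfolding strict_pref_def by blast
  have "z \<in> H"
  proof (rule ccontr)
    assume "z \<notin> H"
    with side bounds have "z \<in> G i \<union> K" by blast
    with important yH(1) have "(y, z) \<in> R i" by blast
    moreover from \<open>z \<notin> H\<close> yH most have "(z, y) \<in> R i" by auto
    ultimately show False using asym by (blast dest: asymD)
  qed
  with z side disj have zD: "z \<in> sym_diff (X \<inter> H) (Y - K)" "z \<in> (Y - K) \<inter> (M - G i)"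
    by blast+
  have "strict_pref M G R i (X \<inter> H) (Y - K)"
    unfolding strict_pref_def
  proof (intro conjI bexI[of _ z])
    show "\<forall>w \<in> sym_diff (X \<inter> H) (Y - K). w \<noteq> z \<longrightarrow> (z, w) \<in> R i"
      using sub most by blast
  qed (use False zD in auto)
  then show ?thesis by (simp add: weak_pref_def)
qed

lemma sd_run_chores_unique:
  assumes "sd_run G R q \<sigma> C Rem A" "distinct \<sigma>"
    and "\<forall>j\<in>set \<sigma>. asym (R j) \<and> Rem \<inter> G j = {} \<and> X j \<inter> G j = {} \<and> C j \<inter> Rem = {}"
    and "\<forall>j\<in>set \<sigma>. weak_pref M G R j (X j) (A j - C j)"
    and "(\<Union>j\<in>set \<sigma>. A j - C j) \<subseteq> (\<Union>j\<in>set \<sigma>. X j)"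
  shows "\<forall>j\<in>set \<sigma>. X j = A j - C j"
  using assms
proof (induction \<sigma> arbitrary: C Rem)
  case Nil
  then show ?case by simp
next
  case (Cons t \<sigma>)
  then obtain P where pick: "sd_pick G R t (q t) Rem P"
    and run: "sd_run G R q \<sigma> (C(t := C t \<union> P)) (Rem - P) A" by auto
  have t: "t \<notin> set \<sigma>" using Cons.prems(2) by simp
  have t_chores: "asym (R t)" "Rem \<inter> G t = {}" "X t \<inter> G t = {}" "C t \<inter> Rem = {}"
    using Cons.prems(3) by auto
  have "P \<subseteq> Rem" using pick by (simp add: sd_pick_def)
  have picked: "A t - C t = P"
    using sd_run_inactive[OF run t] \<open>P \<subseteq> Rem\<close> t_chores(4) by auto
  have t_pref: "weak_pref M G R t (X t) P"
    using Cons.prems(4) picked by auto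
  have later: "A j - C j \<subseteq> Rem - P" if "j \<in> set \<sigma>" for j
    using sd_run_extends[OF run, of j] that t by (auto split: if_splits)
  have no_extra: "X t \<inter> (Rem - P) = {}"
    using sd_pick_chores_no_extra[OF pick t_chores(1-3) t_pref] .
  have unchanged: "(C(t := C t \<union> P)) j = C j" if "j \<in> set \<sigma>" for j
    using t that by auto
  have "(\<Union>j\<in>set \<sigma>. A j - C j) \<subseteq> (\<Union>j\<in>set \<sigma>. X j)"
    using Cons.prems(5) later no_extra by (simp, blast)
  then have "\<forall>j\<in>set \<sigma>. X j = A j - (C(t := C t \<union> P)) j"
    using Cons.prems(2-4) unchanged by (intro Cons.IH[OF run]) auto
  with t have IH: "\<forall>j\<in>set \<sigma>. X j = A j - C j" by auto
  have "(\<Union>j\<in>set \<sigma>. X j) \<inter> P = {}"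
    using IH later by blast
  with picked Cons.prems(5) have "P \<subseteq> X t" by (simp, blast)
  with t_pref t_chores(3) have "X t = P" by (rule weak_pref_chores_superset_eq)
  with IH picked show ?case by simp
qed

lemma strict_pref_cong:
  assumes "X - Y = X' - Y'" "Y - X = Y' - X'"
  shows "strict_pref M G R i X Y = strict_pref M G R i X' Y'"
proof -
  have "X = Y \<longleftrightarrow> X' = Y'" using assms by blast
  moreover have "z \<in> X \<inter> G i \<or> z \<in> Y \<inter> (M - G i) \<longleftrightarrow> z \<in> X' \<inter> G i \<or> z \<in> Y' \<inter> (M - G i)"
    if "z \<in> sym_diff X Y" for z
    using assms that by blast
  ultimately show ?thesis
    unfolding strict_pref_def using assms by (metis (no_types, lifting))
qed

lemma pareto_dominates_remove_common:
  assumes dom: "pareto_dominates n M G R A' A"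
    and common: "\<forall>i<n. A' i \<inter> H = A i \<inter> H"
    and rest: "\<forall>i<n. A i - H = B i"
  shows "pareto_dominates n M G R (\<lambda>i. A' i - H) B"
proof -
  have same_diff: "(A' i - H) - B i = A' i - A i" "B i - (A' i - H) = A i - A' i" if "i < n" for i
    using common rest that by blast+
  then have strict: "strict_pref M G R i (A' i - H) (B i) = strict_pref M G R i (A' i) (A i)"
    if "i < n" for i
    using that by (intro strict_pref_cong) auto
  have equal: "A' i - H = B i \<longleftrightarrow> A' i = A i" if "i < n" for i
    using common rest that by blast
  have "(\<Union>i<n. A' i - H) = (\<Union>i<n. A' i) - H" by blast
  also have "\<dots> = (\<Union>i<n. A i) - H" using dom by (simp add: pareto_dominates_def)
  also have "\<dots> = (\<Union>i<n. B i)" using rest by blast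
  finally show ?thesis
    using dom strict equal by (auto simp: pareto_dominates_def weak_pref_def)
qed

lemma pareto_dominates_sd_extension_agrees:
  assumes asym: "\<forall>i<n. asym (R i)"
    and chores: "\<forall>i<n. H \<inter> G i = {} \<and> B i \<inter> H = {}"
    and imp: "\<forall>i<n. \<forall>h\<in>H. \<forall>x \<in> G i \<union> B i. (h, x) \<in> R i"
    and \<sigma>: "distinct \<sigma>" "set \<sigma> = {..<n}"
    and run: "sd_run G R q \<sigma> B H A"
    and dom: "pareto_dominates n M G R A' A"
  shows "\<forall>i<n. A' i \<inter> H = A i \<inter> H"
proof -
  have extends: "B i \<subseteq> A i" "A i \<subseteq> B i \<union> H" for i
    using sd_run_extends[OF run] by auto
  have pref: "\<forall>j\<in>set \<sigma>. weak_pref M G R j (A' j \<inter> H) (A j - B j)"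
  proof
    fix j
    assume "j \<in> set \<sigma>"
    with \<sigma>(2) have "j < n" by auto
    with dom have "weak_pref M G R j (A' j) (A j)" by (simp add: pareto_dominates_def)
    with \<open>j < n\<close> asym chores imp show "weak_pref M G R j (A' j \<inter> H) (A j - B j)"
      by (intro weak_pref_restrict_important[OF _ _ _ extends]) auto
  qed
  have cover: "(\<Union>j\<in>set \<sigma>. A j - B j) \<subseteq> (\<Union>j\<in>set \<sigma>. A' j \<inter> H)"
    using dom extends \<sigma>(2) by (auto simp: pareto_dominates_def)
  have "\<forall>j\<in>set \<sigma>. asym (R j) \<and> H \<inter> G j = {} \<and> A' j \<inter> H \<inter> G j = {} \<and> B j \<inter> H = {}"
    using asym chores \<sigma>(2) by blast
  from run \<sigma>(1) this pref cover have "\<forall>j\<in>set \<sigma>. A' j \<inter> H = A j - B j"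
    by (rule sd_run_chores_unique)
  with chores extends \<sigma>(2) show ?thesis by blast
qed

theorem lemma1:
  fixes n :: nat and M :: "'b set" and G :: "nat \<Rightarrow> 'b set" and R :: "nat \<Rightarrow> 'b rel"
    and H :: "'b set" and B :: "nat \<Rightarrow> 'b set"
    and \<sigma> :: "nat list" and q :: "nat \<Rightarrow> nat" and A :: "nat \<Rightarrow> 'b set"
  assumes inst: "lex_instance n M G R"
    and H: "H \<subseteq> common_chores n M G"
    and B: "partial_alloc n (M - H) B"
    and B_po: "pareto_optimal n M G R B"
    and imp: "\<forall>i<n. \<forall>h\<in>H. \<forall>x \<in> G i \<union> B i. (h, x) \<in> R i"
    and \<sigma>: "distinct \<sigma>" "set \<sigma> = {..<n}"
    and run: "sd_run G R q \<sigma> B H A"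
  shows "pareto_optimal n M G R A"
  unfolding pareto_optimal_def
proof
  assume "\<exists>A'. partial_alloc n M A' \<and> pareto_dominates n M G R A' A"
  then obtain A' where alloc: "partial_alloc n M A'" and dom: "pareto_dominates n M G R A' A"
    by blast
  have asym: "\<forall>i<n. asym (R i)"
    using inst asym_on_iff_irrefl_on_if_trans_on
    by (auto simp: lex_instance_def strict_linear_order_on_def)
  have chores: "\<forall>i<n. H \<inter> G i = {} \<and> B i \<inter> H = {}"
    using H B by (auto simp: common_chores_def partial_alloc_def)
  have "\<forall>i<n. A' i \<inter> H = A i \<inter> H"
    using pareto_dominates_sd_extension_agrees[OF asym chores imp \<sigma> run dom] .
  moreover have "\<forall>i<n. A i - H = B i"
    using chores sd_run_extends[OF run] by blast
  ultimately have "pareto_dominates n M G R (\<lambda>i. A' i - H) B"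
    by (rule pareto_dominates_remove_common[OF dom])
  moreover have "partial_alloc n M (\<lambda>i. A' i - H)"
    using alloc unfolding partial_alloc_def by blast
  ultimately show False
    using B_po by (auto simp: pareto_optimal_def)
qed

end
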